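(* Let $q\ge2$ be even, $n\ge1$, $p\ge1$, let $\sigma$ be a permutation of $\mathbb{Z}_2^n$, and let $g:\mathbb{Z}_2^n\to\mathbb{Z}_q$ satisfy $g(y)\equiv\sum_{j=0}^{p-1}2^ja_j(y)\pmod q$ for Boolean functions $a_0,\dots,a_{p-1}$ on $\mathbb{Z}_2^n$. Let $f:\mathbb{Z}_2^n\times\mathbb{Z}_2^n\to\mathbb{Z}_q$, $f(x,y)=\frac q2\,x\cdot\sigma(y)+g(y)$, and for $i\in\{0,\dots,2^p-1\}$ let $g_i(x,y)=x\cdot\sigma(y)\oplus z_{i,0}a_0(y)\oplus\cdots\oplus z_{i,p-1}a_{p-1}(y)$, a Boolean function on $\mathbb{Z}_2^{2n}$. Then every $g_i$ is bent, and for every $u\in\mathbb{Z}_2^{2n}$ there exist $r\in\{0,\dots,2^p-1\}$ and $\epsilon\in\{\pm1\}$ with $(W_{g_0}(u),\dots,W_{g_{2^p-1}}(u))=\epsilon H^{(r)}_{2^p}$. Equivalently, for every $u$, every $t\in\{1,\dots,p\}$ and every $i\in\{0,\dots,2^{t-1}-1\}$, the product $W_{g_i}(u)W_{g_{i+2^{t-1}}}(u)\in\{\pm1\}$ depends only on $u$ and $t$ (not on $i$).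
   Context: For $i\in\{0,\dots,2^m-1\}$, $z_i=(z_{i,0},\dots,z_{i,m-1})\in\mathbb{Z}_2^m$ is the binary vector with $i=\sum_j z_{i,j}2^j$. $H_{2^m}$ is the Sylvester–Hadamard matrix with entries $(H_{2^m})_{k,i}=(-1)^{z_k\cdot z_i}$, and $H^{(r)}_{2^m}$ its $r$-th row. For a Boolean function $G$ on $\mathbb{Z}_2^{N}$, $W_G(u)=2^{-N/2}\sum_{v\in\mathbb{Z}_2^N}(-1)^{G(v)\oplus u\cdot v}$, and $G$ is bent if $|W_G(u)|=1$ for all $u$. *)

theory Defs
  imports Complex_Main
begin

text \<open>Vectors of Z_2^n: functions nat => bool vanishing at indices >= n.\<close>
definition vecs :: "nat \<Rightarrow> (nat \<Rightarrow> bool) set" where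
  "vecs n = {x. \<forall>i\<ge>n. \<not> x i}"

text \<open>Inner product over Z_2 (as a bool, True = 1).\<close>
definition dotp :: "nat \<Rightarrow> (nat \<Rightarrow> bool) \<Rightarrow> (nat \<Rightarrow> bool) \<Rightarrow> bool" where
  "dotp n x y = odd (card {i. i < n \<and> x i \<and> y i})"

text \<open>Z_2^{2n} identified with Z_2^n x Z_2^n; u.v = u1.v1 xor u2.v2.\<close>
definition dotp2 :: "nat \<Rightarrow> (nat \<Rightarrow> bool) \<times> (nat \<Rightarrow> bool) \<Rightarrow> (nat \<Rightarrow> bool) \<times> (nat \<Rightarrow> bool) \<Rightarrow> bool" where
  "dotp2 n u v = (dotp n (fst u) (fst v) \<noteq> dotp n (snd u) (snd v))"

definition sgn_bool :: "bool \<Rightarrow> real" where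
  "sgn_bool b = (if b then -1 else 1)"

definition walsh2 :: "nat \<Rightarrow> ((nat \<Rightarrow> bool) \<times> (nat \<Rightarrow> bool) \<Rightarrow> bool)
    \<Rightarrow> (nat \<Rightarrow> bool) \<times> (nat \<Rightarrow> bool) \<Rightarrow> real" where
  "walsh2 n G u = 2 powr (- real (2*n) / 2) *
     (\<Sum>v\<in>vecs n \<times> vecs n. sgn_bool (G v \<noteq> dotp2 n u v))"

definition bent2 :: "nat \<Rightarrow> ((nat \<Rightarrow> bool) \<times> (nat \<Rightarrow> bool) \<Rightarrow> bool) \<Rightarrow> bool" where
  "bent2 n G = (\<forall>u\<in>vecs n \<times> vecs n. \<bar>walsh2 n G u\<bar> = 1)"

text \<open>Entry (k,i) of the Sylvester--Hadamard matrix H_{2^m}: (-1)^(z_k . z_i),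
  where z_i is the binary expansion of i (bit j = coefficient of 2^j).\<close>
definition hadamard :: "nat \<Rightarrow> nat \<Rightarrow> nat \<Rightarrow> real" where
  "hadamard m k i = sgn_bool (odd (card {j. j < m \<and> bit k j \<and> bit i j}))"

end

theory Submission imports Defs begin

unbundle bit_operations_syntax

text \<open>Each g_i is a Maiorana--McFarland function x \<cdot> \<sigma>(y) \<oplus> h_i(y). Summing over x first,
  the character sum collapses onto the unique y_0 with \<sigma>(y_0) = u_1, so
  W_{g_i}(u_1,u_2) = (-1)^{h_i(y_0) \<oplus> u_2 \<cdot> y_0}. Since h_i(y_0) = z_i \<cdot> z_r, where r is the
  number whose binary digits are a_0(y_0), ..., a_{p-1}(y_0), the vector of Walsh values at u
  is \<plusminus> the r-th row of H_{2^p}. Finally H_{r,i} H_{r,i+2^{t-1}} = (-1)^{z_{r,t-1}} for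
  i < 2^{t-1}, because adding 2^{t-1} to such an i just sets bit t-1.\<close>

lemma sgn_bool_xor: "sgn_bool (a \<noteq> b) = sgn_bool a * sgn_bool b"
  by (simp add: sgn_bool_def)

lemma abs_sgn_bool [simp]: "\<bar>sgn_bool b\<bar> = 1"
  by (simp add: sgn_bool_def)

lemma sgn_bool_in_units: "sgn_bool b \<in> {1, -1}"
  by (simp add: sgn_bool_def)

lemma odd_card_sym_diff:
  assumes "finite A" "finite B"
  shows "odd (card ((A - B) \<union> (B - A))) = (odd (card A) \<noteq> odd (card B))"
proof -
  have "card A = card (A - B) + card (A \<inter> B)" "card B = card (B - A) + card (A \<inter> B)"
    using assms by (metis Int_Diff_disjoint Un_Diff_Int card_Un_disjoint finite_Diff finite_Int
        inf_commute)+
  moreover have "card ((A - B) \<union> (B - A)) = card (A - B) + card (B - A)"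
    using assms by (intro card_Un_disjoint) auto
  ultimately show ?thesis by auto
qed

lemma dotp_commute: "dotp n x y = dotp n y x"
proof -
  have "{i. i < n \<and> x i \<and> y i} = {i. i < n \<and> y i \<and> x i}" by blast
  then show ?thesis by (simp add: dotp_def)
qed

lemma dotp_xor_left: "dotp n (\<lambda>i. x i \<noteq> y i) w = (dotp n x w \<noteq> dotp n y w)"
proof -
  let ?A = "{i. i < n \<and> x i \<and> w i}" and ?B = "{i. i < n \<and> y i \<and> w i}"
  have "{i. i < n \<and> (x i \<noteq> y i) \<and> w i} = (?A - ?B) \<union> (?B - ?A)" by auto
  then show ?thesis unfolding dotp_def using odd_card_sym_diff[of ?A ?B] by simp
qed

lemma dotp_xor_right: "dotp n w (\<lambda>i. x i \<noteq> y i) = (dotp n w x \<noteq> dotp n w y)"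
  unfolding dotp_commute[of n w] by (rule dotp_xor_left)

lemma dotp_unit_vector:
  assumes "k < n"
  shows "dotp n (\<lambda>i. i = k) w = w k"
proof -
  have "{i. i < n \<and> i = k \<and> w i} = (if w k then {k} else {})" using assms by auto
  then show ?thesis by (simp add: dotp_def)
qed

lemma finite_vecs: "finite (vecs n)" and card_vecs: "card (vecs n) = 2 ^ n"
proof -
  have b: "bij_betw (\<lambda>S i. i \<in> S) (Pow {..<n}) (vecs n)"
    by (rule bij_betw_byWitness[where f' = "\<lambda>x. {i. x i}"]) (auto simp: vecs_def not_le[symmetric])
  show "finite (vecs n)" using bij_betw_finite[OF b] by simp
  show "card (vecs n) = 2 ^ n" using bij_betw_same_card[OF b] card_Pow[of "{..<n}"] by simp
qed

lemma xor_in_vecs: "x \<in> vecs n \<Longrightarrow> y \<in> vecs n \<Longrightarrow> (\<lambda>i. x i \<noteq> y i) \<in> vecs n"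
  by (simp add: vecs_def)

lemma bij_betw_translate_vecs:
  assumes "e \<in> vecs n"
  shows "bij_betw (\<lambda>x i. x i \<noteq> e i) (vecs n) (vecs n)"
  by (rule bij_betw_byWitness[where f' = "\<lambda>x i. x i \<noteq> e i"]) (use assms in \<open>auto simp: vecs_def\<close>)

lemma sum_sgn_dotp:
  assumes "w \<in> vecs n"
  shows "(\<Sum>x\<in>vecs n. sgn_bool (dotp n x w)) = (if w = (\<lambda>_. False) then 2 ^ n else 0)"
proof (cases "w = (\<lambda>_. False)")
  case True
  then show ?thesis by (simp add: dotp_def sgn_bool_def card_vecs)
next
  case False
  then obtain k where "w k" by auto
  moreover have "k < n" using \<open>w k\<close> assms by (auto simp: vecs_def not_le[symmetric])
  ultimately have e: "(\<lambda>i. i = k) \<in> vecs n" "dotp n (\<lambda>i. i = k) w"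
    by (auto simp: vecs_def dotp_unit_vector)
  \<comment> \<open>translating by the unit vector e_k with w_k = 1 flips every summand\<close>
  have "(\<Sum>x\<in>vecs n. sgn_bool (dotp n x w))
      = (\<Sum>x\<in>vecs n. sgn_bool (dotp n (\<lambda>i. x i \<noteq> (i = k)) w))"
    by (rule sum.reindex_bij_betw[OF bij_betw_translate_vecs[OF e(1)], symmetric])
  also have "\<dots> = (\<Sum>x\<in>vecs n. sgn_bool (dotp n x w) * sgn_bool True)"
    by (simp only: dotp_xor_left e(2) sgn_bool_xor)
  also have "\<dots> = - (\<Sum>x\<in>vecs n. sgn_bool (dotp n x w))"
    by (simp add: sgn_bool_def sum_negf)
  finally show ?thesis using False by simp
qed

lemma walsh2_maiorana_mcfarland:
  assumes bij: "bij_betw \<sigma> (vecs n) (vecs n)" and u: "u \<in> vecs n \<times> vecs n"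
    and y0: "y0 \<in> vecs n" "\<sigma> y0 = fst u"
  shows "walsh2 n (\<lambda>(x, y). dotp n x (\<sigma> y) \<noteq> h y) u = sgn_bool (h y0 \<noteq> dotp n (snd u) y0)"
proof -
  obtain u1 u2 where uu: "u = (u1, u2)" and u1: "u1 \<in> vecs n" using u by auto
  define c where "c y = sgn_bool (h y \<noteq> dotp n u2 y)" for y
  have summand: "sgn_bool ((case v of (x, y) \<Rightarrow> dotp n x (\<sigma> y) \<noteq> h y) \<noteq> dotp2 n u v)
      = (case v of (x, y) \<Rightarrow> c y * sgn_bool (dotp n x (\<lambda>i. \<sigma> y i \<noteq> u1 i)))" for v
    using dotp_xor_right[of n "fst v" "\<sigma> (snd v)" u1]
    by (cases v) (simp add: c_def dotp2_def uu dotp_commute[of n u1] sgn_bool_def)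
  have inner: "(\<Sum>x\<in>vecs n. sgn_bool (dotp n x (\<lambda>i. \<sigma> y i \<noteq> u1 i)))
      = (if y = y0 then 2 ^ n else 0)" if y: "y \<in> vecs n" for y
  proof -
    have "((\<lambda>i. \<sigma> y i \<noteq> u1 i) = (\<lambda>_. False)) = (\<sigma> y = u1)" by (auto simp: fun_eq_iff)
    also have "\<dots> = (y = y0)" using y0 uu y bij by (auto simp: bij_betw_def inj_on_def)
    finally show ?thesis
      using sum_sgn_dotp[OF xor_in_vecs[OF bij_betw_apply[OF bij y] u1]] by simp
  qed
  have "(\<Sum>v\<in>vecs n \<times> vecs n. sgn_bool ((case v of (x, y) \<Rightarrow> dotp n x (\<sigma> y) \<noteq> h y) \<noteq> dotp2 n u v))
      = (\<Sum>(x, y)\<in>vecs n \<times> vecs n. c y * sgn_bool (dotp n x (\<lambda>i. \<sigma> y i \<noteq> u1 i)))"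
    by (rule sum.cong[OF refl summand])
  also have "\<dots> = (\<Sum>x\<in>vecs n. \<Sum>y\<in>vecs n. c y * sgn_bool (dotp n x (\<lambda>i. \<sigma> y i \<noteq> u1 i)))"
    by (rule sum.cartesian_product[symmetric])
  also have "\<dots> = (\<Sum>y\<in>vecs n. \<Sum>x\<in>vecs n. c y * sgn_bool (dotp n x (\<lambda>i. \<sigma> y i \<noteq> u1 i)))"
    by (rule sum.swap)
  also have "\<dots> = (\<Sum>y\<in>vecs n. c y * (if y = y0 then 2 ^ n else 0))"
    by (intro sum.cong refl) (simp only: sum_distrib_left[symmetric] inner)
  also have "\<dots> = c y0 * 2 ^ n"
    using finite_vecs y0 by (simp add: if_distrib[of "\<lambda>t. c _ * t"] cong: if_cong)
  finally show ?thesis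
    by (simp add: walsh2_def c_def uu powr_minus powr_realpow[symmetric] divide_simps)
qed

lemma ex_nat_with_bits: "\<exists>r::nat<2 ^ p. \<forall>j. bit r j = (j < p \<and> P j)"
proof -
  define r :: nat where "r = take_bit p (horner_sum of_bool 2 (map P [0..<p]))"
  have "bit r j = (j < p \<and> P j)" for j
    by (cases "j < p") (simp_all add: r_def bit_take_bit_iff bit_horner_sum_bit_iff)
  moreover have "r < 2 ^ p" by (simp add: r_def)
  ultimately show ?thesis by blast
qed

lemma abs_hadamard: "\<bar>hadamard m k i\<bar> = 1"
  by (simp add: hadamard_def)

lemma hadamard_mult_shift:
  assumes "k < m" and "i < 2 ^ k"
  shows "hadamard m r i * hadamard m r (i + 2 ^ k) = sgn_bool (bit r k)"
proof -
  have bit_i: "bit i j \<Longrightarrow> j < k" for j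
    using assms(2) by (metis bit_take_bit_iff take_bit_nat_eq_self_iff)
  have "i + 2 ^ k = i OR 2 ^ k"
    by (rule disjunctive_add_eq_or) (auto intro!: bit_eqI dest: bit_i simp: bit_and_iff bit_exp_iff)
  then have bit_shift: "bit (i + 2 ^ k) j = (bit i j \<or> j = k)" for j
    by (simp add: bit_or_iff bit_exp_iff)
  let ?S = "{j. j < m \<and> bit r j \<and> bit i j}"
  have "{j. j < m \<and> bit r j \<and> bit (i + 2 ^ k) j} = (if bit r k then insert k ?S else ?S)"
    using assms(1) by (auto simp: bit_shift)
  moreover have "k \<notin> ?S" using bit_i by blast
  ultimately show ?thesis by (simp add: hadamard_def sgn_bool_def)
qed

lemma signed_hadamard_row_pair_products:
  assumes "\<epsilon> \<in> {1, -1}" and W: "\<forall>i<2 ^ p. w i = \<epsilon> * hadamard p r i"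
    and "1 \<le> t" "t \<le> p"
  shows "\<exists>c\<in>{1, -1::real}. \<forall>i<2 ^ (t - 1). w i * w (i + 2 ^ (t - 1)) = c"
proof (intro bexI allI impI)
  have "(2::nat) ^ (t - 1) + 2 ^ (t - 1) = 2 ^ t" using assms(3) by (cases t) auto
  then have two_halves: "(2::nat) ^ (t - 1) + 2 ^ (t - 1) \<le> 2 ^ p"
    using assms(4) power_increasing[of t p "2::nat"] by simp
  fix i :: nat assume "i < 2 ^ (t - 1)"
  with two_halves have "w i * w (i + 2 ^ (t - 1))
      = (\<epsilon> * \<epsilon>) * (hadamard p r i * hadamard p r (i + 2 ^ (t - 1)))"
    using W by simp
  also have "\<dots> = sgn_bool (bit r (t - 1))"
    using assms \<open>i < 2 ^ (t - 1)\<close> hadamard_mult_shift[of "t - 1" p i r] by auto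
  finally show "w i * w (i + 2 ^ (t - 1)) = sgn_bool (bit r (t - 1))" .
qed (rule sgn_bool_in_units)

lemma walsh2_eq_signed_hadamard_row:
  assumes bij: "bij_betw \<sigma> (vecs n) (vecs n)"
    and gi: "\<forall>i<2^p. \<forall>x y. gi i (x, y) = (dotp n x (\<sigma> y) \<noteq> odd (card {j. j < p \<and> bit i j \<and> a j y}))"
    and u: "u \<in> vecs n \<times> vecs n"
  shows "\<exists>r<2^p. \<exists>\<epsilon>\<in>{1, -1::real}. \<forall>i<2^p. walsh2 n (gi i) u = \<epsilon> * hadamard p r i"
proof -
  have "fst u \<in> \<sigma> ` vecs n" using u bij_betw_imp_surj_on[OF bij] by auto
  then obtain y0 where y0: "y0 \<in> vecs n" "\<sigma> y0 = fst u" by auto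
  obtain r :: nat where r: "r < 2 ^ p" "\<And>j. bit r j = (j < p \<and> a j y0)"
    using ex_nat_with_bits[of p "\<lambda>j. a j y0"] by blast
  have "walsh2 n (gi i) u = sgn_bool (dotp n (snd u) y0) * hadamard p r i" if "i < 2 ^ p" for i
  proof -
    have gi_i: "gi i = (\<lambda>(x, y). dotp n x (\<sigma> y) \<noteq> odd (card {j. j < p \<and> bit i j \<and> a j y}))"
      using gi that by (auto simp: fun_eq_iff)
    have "walsh2 n (gi i) u
        = sgn_bool (odd (card {j. j < p \<and> bit i j \<and> a j y0}) \<noteq> dotp n (snd u) y0)"
      unfolding gi_i by (rule walsh2_maiorana_mcfarland[OF bij u y0])
    moreover have "{j. j < p \<and> bit i j \<and> a j y0} = {j. j < p \<and> bit r j \<and> bit i j}"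
      using r(2) by auto
    ultimately show ?thesis by (simp only: sgn_bool_xor hadamard_def mult.commute)
  qed
  then show ?thesis using r(1) sgn_bool_in_units by blast
qed

theorem mainTheorem5:
  fixes q n p :: nat
    and \<sigma> :: "(nat \<Rightarrow> bool) \<Rightarrow> (nat \<Rightarrow> bool)"
    and a :: "nat \<Rightarrow> (nat \<Rightarrow> bool) \<Rightarrow> bool"
    and g :: "(nat \<Rightarrow> bool) \<Rightarrow> int"
    and f :: "(nat \<Rightarrow> bool) \<times> (nat \<Rightarrow> bool) \<Rightarrow> int"
    and gi :: "nat \<Rightarrow> (nat \<Rightarrow> bool) \<times> (nat \<Rightarrow> bool) \<Rightarrow> bool"
  assumes "q \<ge> 2" and "even q" and "n \<ge> 1" and "p \<ge> 1"
    and "bij_betw \<sigma> (vecs n) (vecs n)"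
    and "\<forall>y\<in>vecs n. 0 \<le> g y \<and> g y < int q \<and>
           g y = (\<Sum>j<p. 2^j * (if a j y then 1 else 0)) mod int q"
    and "\<forall>x\<in>vecs n. \<forall>y\<in>vecs n.
           f (x, y) = (int (q div 2) * (if dotp n x (\<sigma> y) then 1 else 0) + g y) mod int q"
    and "\<forall>i<2^p. \<forall>x y. gi i (x, y) =
           (dotp n x (\<sigma> y) \<noteq> odd (card {j. j < p \<and> bit i j \<and> a j y}))"
  shows "(\<forall>i<2^p. bent2 n (gi i))
    \<and> (\<forall>u\<in>vecs n \<times> vecs n. \<exists>r<2^p. \<exists>\<epsilon>\<in>{1, -1::real}.
          \<forall>i<2^p. walsh2 n (gi i) u = \<epsilon> * hadamard p r i)
    \<and> (\<forall>u\<in>vecs n \<times> vecs n. \<forall>t. 1 \<le> t \<and> t \<le> p \<longrightarrow>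
          (\<exists>c\<in>{1, -1::real}. \<forall>i<2^(t-1).
             walsh2 n (gi i) u * walsh2 n (gi (i + 2^(t-1))) u = c))"
proof -
  have rows: "\<forall>u\<in>vecs n \<times> vecs n. \<exists>r<2^p. \<exists>\<epsilon>\<in>{1, -1::real}.
      \<forall>i<2^p. walsh2 n (gi i) u = \<epsilon> * hadamard p r i"
    using walsh2_eq_signed_hadamard_row[OF assms(5,8)] by blast
  moreover have "\<forall>i<2^p. bent2 n (gi i)"
    unfolding bent2_def
  proof (intro allI impI ballI)
    fix i :: nat and u assume "i < 2 ^ p" "u \<in> vecs n \<times> vecs n"
    with rows obtain r \<epsilon> where "\<epsilon> \<in> {1, -1::real}" "walsh2 n (gi i) u = \<epsilon> * hadamard p r i"
      by blast
    then show "\<bar>walsh2 n (gi i) u\<bar> = 1" by (auto simp: abs_hadamard)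
  qed
  moreover have "\<forall>u\<in>vecs n \<times> vecs n. \<forall>t. 1 \<le> t \<and> t \<le> p \<longrightarrow>
      (\<exists>c\<in>{1, -1::real}. \<forall>i<2^(t-1). walsh2 n (gi i) u * walsh2 n (gi (i + 2^(t-1))) u = c)"
  proof (intro ballI allI impI)
    fix u t assume "u \<in> vecs n \<times> vecs n" "1 \<le> t \<and> t \<le> p"
    with rows obtain r \<epsilon> where "\<epsilon> \<in> {1, -1::real}"
      "\<forall>i<2^p. walsh2 n (gi i) u = \<epsilon> * hadamard p r i" by blast
    with \<open>1 \<le> t \<and> t \<le> p\<close> show "\<exists>c\<in>{1, -1::real}. \<forall>i<2^(t-1).
        walsh2 n (gi i) u * walsh2 n (gi (i + 2^(t-1))) u = c"
      by (intro signed_hadamard_row_pair_products) auto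
  qed
  ultimately show ?thesis by blast
qed

end
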